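(* Consider a training set of samples, each consisting of an ILP instance with bipartite representation $\mathcal{A}=\begin{bmatrix}\mathbf{A}&\mathbf{b}\\ \mathbf{c}^\top&0\end{bmatrix}$ ($\mathbf{A}\in\mathbb{R}^{m\times n}$), an augmented feature vector $\mathbf{z}\in\mathbb{R}^n$, and a label $\bar{\mathbf{x}}\in\mathbb{R}^n$; the model input is the augmented representation $\tilde{\mathcal{A}}=\begin{bmatrix}\mathbf{A}&\mathbf{b}\\ \mathbf{c}^\top&0\\ \mathbf{z}^\top&0\end{bmatrix}\in\mathbb{R}^{(m+2)\times(n+1)}$. Let $\ell\ge 0$ be a loss function that is permutation-invariant ($\ell(\pi^v(\mathbf{a}),\pi^v(\mathbf{b}))=\ell(\mathbf{a},\mathbf{b})$ for all $\pi\in S_n$) and has the identity property ($\ell(\mathbf{a},\mathbf{b})=0\iff \mathbf{a}=\mathbf{b}$). Suppose the augmented features violate isomorphic consistency, i.e., there are two samples $(\mathcal{A},\mathbf{z},\bar{\mathbf{x}})$ and $(\mathcal{A}',\mathbf{z}',\bar{\mathbf{x}}')$ and permutations $\pi\in S_n$, $\sigma\in S_m$ with $\pi^c(\sigma^r(\mathcal{A}))=\mathcal{A}'$ and $\pi^v(\mathbf{z})=\mathbf{z}'$ but $\pi^v(\bar{\mathbf{x}})\neq\bar{\mathbf{x}}'$. Then for every model $f_\theta$ mapping augmented representations to $\mathbb{R}^n$ that satisfies $f_\theta(\pi^c(\tilde{\mathcal{M}}))=\pi^v(f_\theta(\tilde{\mathcal{M}}))$ for all $\pi\in S_n$ and $f_\theta(\sigma^r(\tilde{\mathcal{M}}))=f_\theta(\tilde{\mathcal{M}})$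 for all $\sigma\in S_m$, the total training loss $\sum_{\text{samples}}\ell(f_\theta(\tilde{\mathcal{A}}),\bar{\mathbf{x}})$ is strictly positive; that is, the minimal loss cannot be $0$.
   Context: $S_n$ is the set of permutations of $\{1,\dots,n\}$. For $\pi\in S_n$: $\pi^v(\mathbf{y})=[y_{\pi(1)},\dots,y_{\pi(n)},y_{n+1},\dots]^\top$ permutes the top-most $n$ entries of a vector; $\pi^c(\mathbf{X})=[\mathbf{X}_{:,\pi(1)},\dots,\mathbf{X}_{:,\pi(n)},\mathbf{X}_{:,n+1},\dots]$ permutes the left-most $n$ columns of a matrix; for $\sigma\in S_m$, $\sigma^r(\mathbf{X})=[\mathbf{X}_{\sigma(1),:},\dots,\mathbf{X}_{\sigma(m),:},\mathbf{X}_{m+1,:},\dots]^\top$ permutes the top-most $m$ rows. The principle of isomorphic consistency requires: whenever two samples have instances with $\pi^c(\sigma^r(\mathcal{A}))=\mathcal{A}'$ for some $\pi\in S_n,\sigma\in S_m$, then $\pi^v(\mathbf{z})=\mathbf{z}'$ implies $\pi^v(\bar{\mathbf{x}})=\bar{\mathbf{x}}'$. *)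

theory Defs
  imports Complex_Main "HOL-Combinatorics.Permutations"
begin

text \<open>Vectors are functions nat => real (entry i is the (i+1)-th coordinate),
matrices are functions nat => nat => real (row index, column index), 0-indexed.
A permutation in S_n is a bijection permuting {..<n} and fixing everything else,
so the following are exactly the paper's operations on the top-most / left-most entries.\<close>

definition pv :: "(nat \<Rightarrow> nat) \<Rightarrow> (nat \<Rightarrow> real) \<Rightarrow> (nat \<Rightarrow> real)" where
  "pv \<pi> y = (\<lambda>i. y (\<pi> i))"

definition pc :: "(nat \<Rightarrow> nat) \<Rightarrow> (nat \<Rightarrow> nat \<Rightarrow> real) \<Rightarrow> (nat \<Rightarrow> nat \<Rightarrow> real)" where
  "pc \<pi> X = (\<lambda>i j. X i (\<pi> j))"

definition pr :: "(nat \<Rightarrow> nat) \<Rightarrow> (nat \<Rightarrow> nat \<Rightarrow> real) \<Rightarrow> (nat \<Rightarrow> nat \<Rightarrow> real)" where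
  "pr \<sigma> X = (\<lambda>i j. X (\<sigma> i) j)"

definition is_mat :: "nat \<Rightarrow> nat \<Rightarrow> (nat \<Rightarrow> nat \<Rightarrow> real) \<Rightarrow> bool" where
  "is_mat p q M \<longleftrightarrow> (\<forall>i j. (p \<le> i \<or> q \<le> j) \<longrightarrow> M i j = 0)"

definition bip :: "nat \<Rightarrow> nat \<Rightarrow> (nat \<Rightarrow> nat \<Rightarrow> real) \<Rightarrow> (nat \<Rightarrow> real) \<Rightarrow> (nat \<Rightarrow> real)
    \<Rightarrow> (nat \<Rightarrow> nat \<Rightarrow> real)" where
  "bip m n A b c = (\<lambda>i j.
     if i < m \<and> j < n then A i j
     else if i < m \<and> j = n then b i
     else if i = m \<and> j < n then c j
     else 0)"

definition aug :: "nat \<Rightarrow> nat \<Rightarrow> (nat \<Rightarrow> nat \<Rightarrow> real) \<Rightarrow> (nat \<Rightarrow> real) \<Rightarrow> (nat \<Rightarrow> real)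
    \<Rightarrow> (nat \<Rightarrow> real) \<Rightarrow> (nat \<Rightarrow> nat \<Rightarrow> real)" where
  "aug m n A b c z = (\<lambda>i j.
     if i < m \<and> j < n then A i j
     else if i < m \<and> j = n then b i
     else if i = m \<and> j < n then c j
     else if i = Suc m \<and> j < n then z j
     else 0)"

text \<open>A training sample: sizes m, n, ILP data A, b, c, augmented feature z, label x.\<close>
record sample =
  sm :: nat
  sn :: nat
  sA :: "nat \<Rightarrow> nat \<Rightarrow> real"
  sb :: "nat \<Rightarrow> real"
  sc :: "nat \<Rightarrow> real"
  sz :: "nat \<Rightarrow> real"
  sx :: "nat \<Rightarrow> real"

end

theory Submission
  imports Defs
begin

text \<open>A model that is equivariant under column permutations and invariant under row
permutations maps the augmented representations of the two samples to outputs differing by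
\<open>\<pi>\<close>, because the augmented representations themselves differ by \<open>\<pi>\<close> and \<open>\<sigma>\<close>.
Zero total loss would force both outputs to equal the labels, hence \<open>\<pi>\<^sup>v(x) = x'\<close>,
contrary to the violated consistency.\<close>

lemma aug_eq_bip:
  "aug m n A b c z = (\<lambda>i j. if i = Suc m then (if j < n then z j else 0) else bip m n A b c i j)"
  by (auto simp: aug_def bip_def fun_eq_iff)

lemma is_mat_aug: "is_mat (m + 2) (n + 1) (aug m n A b c z)"
  by (auto simp: is_mat_def aug_def)

lemma is_mat_pr:
  assumes "\<sigma> permutes {..<m}" "m \<le> p" "is_mat p q M"
  shows "is_mat p q (pr \<sigma> M)"
  using assms permutes_not_in[OF assms(1)] by (auto simp: is_mat_def pr_def)

lemma pc_pr_aug: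
  assumes \<pi>: "\<pi> permutes {..<n}" and \<sigma>: "\<sigma> permutes {..<m}"
    and bip: "pc \<pi> (pr \<sigma> (bip m n A b c)) = bip m n A' b' c'"
    and feat: "\<And>j. j < n \<Longrightarrow> z (\<pi> j) = z' j"
  shows "pc \<pi> (pr \<sigma> (aug m n A b c z)) = aug m n A' b' c' z'"
proof (intro ext)
  fix i j
  have \<sigma>_Suc_m: "\<sigma> (Suc m) = Suc m"
    using permutes_not_in[OF \<sigma>] by simp
  have \<pi>_lt: "\<pi> j < n \<longleftrightarrow> j < n"
    using permutes_in_image[OF \<pi>] by simp
  show "pc \<pi> (pr \<sigma> (aug m n A b c z)) i j = aug m n A' b' c' z' i j"
  proof (cases "i = Suc m")
    case True
    then show ?thesis
      using \<sigma>_Suc_m \<pi>_lt feat[of j] permutes_not_in[OF \<pi>, of j]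
      by (simp add: aug_eq_bip pc_def pr_def)
  next
    case False
    then have "\<sigma> i \<noteq> Suc m"
      using \<sigma>_Suc_m permutes_inj[OF \<sigma>] by (metis injD)
    then show ?thesis
      using False fun_cong[OF fun_cong[OF bip, of i], of j]
      by (simp add: aug_eq_bip pc_def pr_def)
  qed
qed

lemma equivariant_pc_pr:
  assumes f_col: "\<And>M \<tau>. is_mat (m + 2) (n + 1) M \<Longrightarrow> \<tau> permutes {..<n} \<Longrightarrow>
                    \<forall>i<n. f (pc \<tau> M) i = pv \<tau> (f M) i"
    and f_row: "\<And>M \<tau>. is_mat (m + 2) (n + 1) M \<Longrightarrow> \<tau> permutes {..<m} \<Longrightarrow>
                    \<forall>i<n. f (pr \<tau> M) i = f M i"
    and M: "is_mat (m + 2) (n + 1) M"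
    and \<pi>: "\<pi> permutes {..<n}" and \<sigma>: "\<sigma> permutes {..<m}"
    and i: "i < n"
  shows "f (pc \<pi> (pr \<sigma> M)) i = f M (\<pi> i)"
proof -
  have "is_mat (m + 2) (n + 1) (pr \<sigma> M)"
    using is_mat_pr[OF \<sigma> _ M] by simp
  then have "f (pc \<pi> (pr \<sigma> M)) i = f (pr \<sigma> M) (\<pi> i)"
    using f_col \<pi> i by (simp add: pv_def)
  also have "\<dots> = f M (\<pi> i)"
    using f_row[OF M \<sigma>] permutes_in_image[OF \<pi>] i by simp
  finally show ?thesis .
qed

theorem proposition2:
  fixes S :: "sample list"
    and loss :: "nat \<Rightarrow> (nat \<Rightarrow> real) \<Rightarrow> (nat \<Rightarrow> real) \<Rightarrow> real"
    and f :: "nat \<Rightarrow> nat \<Rightarrow> (nat \<Rightarrow> nat \<Rightarrow> real) \<Rightarrow> (nat \<Rightarrow> real)"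
    and s s' :: sample and \<pi> \<sigma> :: "nat \<Rightarrow> nat"
  assumes loss_nonneg: "\<And>n a b. loss n a b \<ge> 0"
    and loss_perm: "\<And>n \<tau> a b. \<tau> permutes {..<n} \<Longrightarrow> loss n (pv \<tau> a) (pv \<tau> b) = loss n a b"
    and loss_id: "\<And>n a b. loss n a b = 0 \<longleftrightarrow> (\<forall>i<n. a i = b i)"
    and f_col: "\<And>m n M \<tau>. is_mat (m + 2) (n + 1) M \<Longrightarrow> \<tau> permutes {..<n} \<Longrightarrow>
                  \<forall>i<n. f m n (pc \<tau> M) i = pv \<tau> (f m n M) i"
    and f_row: "\<And>m n M \<tau>. is_mat (m + 2) (n + 1) M \<Longrightarrow> \<tau> permutes {..<m} \<Longrightarrow>
                  \<forall>i<n. f m n (pr \<tau> M) i = f m n M i"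
    and s_in: "s \<in> set S" and s'_in: "s' \<in> set S"
    and dims: "sm s' = sm s" "sn s' = sn s"
    and pi: "\<pi> permutes {..<sn s}" and sigma: "\<sigma> permutes {..<sm s}"
    and iso: "pc \<pi> (pr \<sigma> (bip (sm s) (sn s) (sA s) (sb s) (sc s)))
              = bip (sm s') (sn s') (sA s') (sb s') (sc s')"
    and feat: "\<forall>i<sn s. pv \<pi> (sz s) i = sz s' i"
    and label: "\<exists>i<sn s. pv \<pi> (sx s) i \<noteq> sx s' i"
  shows "(\<Sum>t\<leftarrow>S. loss (sn t) (f (sm t) (sn t) (aug (sm t) (sn t) (sA t) (sb t) (sc t) (sz t))) (sx t)) > 0"
proof (rule ccontr)
  let ?loss = "\<lambda>t. loss (sn t) (f (sm t) (sn t) (aug (sm t) (sn t) (sA t) (sb t) (sc t) (sz t))) (sx t)"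
  define M where "M = aug (sm s) (sn s) (sA s) (sb s) (sc s) (sz s)"
  assume "\<not> sum_list (map ?loss S) > 0"
  then have "sum_list (map ?loss S) = 0"
    using sum_list_nonneg[of "map ?loss S"] loss_nonneg by fastforce
  then have zero: "?loss t = 0" if "t \<in> set S" for t
    using that sum_list_nonneg_eq_0_iff[of "map ?loss S"] loss_nonneg by auto
  have fit: "\<forall>i<sn s. f (sm s) (sn s) M i = sx s i"
    using zero[OF s_in] loss_id by (simp add: M_def)
  have "pc \<pi> (pr \<sigma> M) = aug (sm s') (sn s') (sA s') (sb s') (sc s') (sz s')"
    using pc_pr_aug[OF pi sigma iso[unfolded dims]] feat dims by (simp add: M_def pv_def)
  then have fit': "\<forall>i<sn s. f (sm s) (sn s) (pc \<pi> (pr \<sigma> M)) i = sx s' i"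
    using zero[OF s'_in] loss_id dims by simp
  from label obtain i where i: "i < sn s" "sx s (\<pi> i) \<noteq> sx s' i"
    by (auto simp: pv_def)
  have "sx s' i = f (sm s) (sn s) (pc \<pi> (pr \<sigma> M)) i"
    using fit' i(1) by simp
  also have "\<dots> = f (sm s) (sn s) M (\<pi> i)"
    unfolding M_def
    by (rule equivariant_pc_pr[where f = "f (sm s) (sn s)", OF f_col f_row is_mat_aug pi sigma i(1)])
  also have "\<dots> = sx s (\<pi> i)"
    using fit permutes_in_image[OF pi] i(1) by simp
  finally show False
    using i(2) by simp
qed

end
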